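(* For every real $p\ge1$ there exist constants $c_p,c_p'>0$, independent of $L$, such that for all integers $L\ge1$, \[ c_p\le E_Q\big[(\bar\tau^{(L)}_1)^p\big]^{1/p}\le c_p',\qquad\text{where }\bar\tau^{(L)}_1=4^{-L}\tau^{(L)}_1. \]
   Context: $\epsilon=(\epsilon_1,\epsilon_2,\dots)\in\{-1,0,1\}^{\mathbb{N}}$ has product law $Q$ with $Q(\epsilon_1=1)=Q(\epsilon_1=-1)=\tfrac14$, $Q(\epsilon_1=0)=\tfrac12$. For an integer $L\ge1$, $\tau^{(L)}_0=0$ and for $n\ge1$, $\tau^{(L)}_n=\inf\{j\ge\tau^{(L)}_{n-1}+L:\ (\epsilon_{j-L},\dots,\epsilon_{j-1})=(1,\dots,1),\ \epsilon_j\in\{-1,0\}\}$. *)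

theory Defs
  imports "HOL-Probability.Probability"
begin

definition eps_pmf :: "int pmf" where
  "eps_pmf = pmf_of_multiset {#-1, 0, 0, 1#}"

text \<open>Product law Q on sequences. The sequence is indexed from 0:
  w i stands for the paper's epsilon_(i+1).\<close>
definition Q :: "(nat \<Rightarrow> int) measure" where
  "Q = (\<Pi>\<^sub>M i\<in>(UNIV::nat set). measure_pmf eps_pmf)"

definition eps :: "(nat \<Rightarrow> int) \<Rightarrow> nat \<Rightarrow> int" where
  "eps w k = w (k - 1)"

text \<open>The condition defining tau_1^(L) at time j (with j - L \<ge> 1 so that all
  indices are defined): epsilon_(j-L) = ... = epsilon_(j-1) = 1 and epsilon_j \<in> {-1,0}.\<close>
definition hit :: "nat \<Rightarrow> (nat \<Rightarrow> int) \<Rightarrow> nat \<Rightarrow> bool" where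
  "hit L w j \<longleftrightarrow> j \<ge> L + 1 \<and> (\<forall>k\<in>{j-L..j-1}. eps w k = 1) \<and> eps w j \<in> {-1, 0}"

text \<open>tau_1^(L) = inf {j \<ge> tau_0 + L : ...} with tau_0 = 0; infimum of the empty set is \<infinity>.\<close>
definition tau1 :: "nat \<Rightarrow> (nat \<Rightarrow> int) \<Rightarrow> enat" where
  "tau1 L w = (if \<exists>j. hit L w j then enat (LEAST j. hit L w j) else \<infinity>)"

definition taubar_pow :: "real \<Rightarrow> nat \<Rightarrow> (nat \<Rightarrow> int) \<Rightarrow> ennreal" where
  "taubar_pow p L w = (case tau1 L w of enat n \<Rightarrow> ennreal ((real n / 4 ^ L) powr p) | \<infinity> \<Rightarrow> \<infinity>)"

end

theory Submission
  imports Defs "HOL-Real_Asymp.Real_Asymp"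
begin

(* Let u n = Q(tau > n) and let pi = 3 / 4^(L+1) be the probability of the pattern
   "L ones followed by a non-one". Hits are more than L apart, so a hit at time s + L + 1
   with no hit up to s already excludes hits up to s + L; since that hit only depends on
   coordinates s, ..., s + L, it is independent of the first s coordinates. This gives
   u (n + 1) <= (1 - pi) u n for n >= L, hence u (k 4^L) <= exp (-3k/8), and summing against
   (k + 1)^p bounds the p-th moment of tau / 4^L uniformly in L. Conversely a union bound over
   the possible hit times gives u (4^L - 1) >= 1 - 4^L pi = 1/4, and tau / 4^L >= 1 on that
   event. *)

lemma (in sequence_space) emeasure_prefix_and_shift:
  assumes A: "A \<in> sets S" and B: "B \<in> sets S"
    and prefix: "\<And>w v. (\<And>i. i < s \<Longrightarrow> w i = v i) \<Longrightarrow> w \<in> A \<longleftrightarrow> v \<in> A"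
  shows "emeasure S {w \<in> A. (\<lambda>i. w (s + i)) \<in> B} = emeasure S A * emeasure S B"
proof -
  let ?comb = "\<lambda>(\<omega>, \<omega>'). comb_seq s \<omega> \<omega>'"
  let ?E = "{w \<in> A. (\<lambda>i. w (s + i)) \<in> B}"
  have "(\<lambda>w i. w (s + i)) \<in> measurable S S"
    by (rule measurable_PiM_single') (auto simp: space_PiM PiE_iff)
  then have "A \<inter> ((\<lambda>w i. w (s + i)) -` B \<inter> space S) \<in> sets S"
    using A B by (intro sets.Int measurable_sets)
  moreover have "A \<inter> ((\<lambda>w i. w (s + i)) -` B \<inter> space S) = ?E"
    using sets.sets_into_space[OF A] by auto
  ultimately have E: "?E \<in> sets S" by simp
  have "?comb -` ?E \<inter> space (S \<Otimes>\<^sub>M S) = A \<times> B"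
  proof -
    have "comb_seq s \<omega> \<omega>' \<in> A \<longleftrightarrow> \<omega> \<in> A" for \<omega> \<omega>'
      by (rule prefix) (simp add: comb_seq_less)
    moreover have "(\<lambda>i. comb_seq s \<omega> \<omega>' (s + i)) = \<omega>'" for \<omega> \<omega>' :: "nat \<Rightarrow> 'a"
      using comb_seq_add[of s \<omega> \<omega>'] by (simp add: add.commute)
    ultimately show ?thesis
      using sets.sets_into_space[OF A] sets.sets_into_space[OF B]
      by (auto simp: space_pair_measure)
  qed
  then have "emeasure S ?E = emeasure (S \<Otimes>\<^sub>M S) (A \<times> B)"
    using emeasure_distr[OF measurable_comb_seq[of s] E] by (simp add: PiM_comb_seq[of s])
  also have "\<dots> = emeasure S A * emeasure S B"
    by (rule P.emeasure_pair_measure_Times[OF A B])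
  finally show ?thesis .
qed

definition scaled_powr :: "real \<Rightarrow> nat \<Rightarrow> enat \<Rightarrow> ennreal" where
  "scaled_powr p T t = (case t of enat m \<Rightarrow> ennreal ((real m / real T) powr p) | \<infinity> \<Rightarrow> \<infinity>)"

lemma one_le_scaled_powr:
  assumes "0 \<le> p" "0 < T" "enat T \<le> t"
  shows "1 \<le> scaled_powr p T t"
proof (cases t)
  case (enat m)
  with assms have "1 \<le> real m / real T" by simp
  then have "1 \<le> (real m / real T) powr p" using assms(1) by (rule ge_one_powr_ge_zero)
  with enat show ?thesis by (simp add: scaled_powr_def)
qed (simp add: scaled_powr_def)

lemma ennreal_le_suminf: "(f::nat \<Rightarrow> ennreal) k \<le> suminf f"
  using ennreal_suminf_lessD[of f "f k" k] by (meson not_le order.irrefl)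

lemma scaled_powr_le_suminf:
  assumes "0 \<le> p" "0 < T"
  shows "scaled_powr p T t
    \<le> (\<Sum>k. ennreal ((real k + 1) powr p) * indicator {t. enat (k * T) < t} t)"
proof (cases t)
  case (enat m)
  show ?thesis
  proof (cases "m = 0")
    case False
    define k where "k = (m - 1) div T"
    have "k * T \<le> m - 1"
      unfolding k_def by (rule div_times_less_eq_dividend)
    with False have "k * T < m" by simp
    moreover have "m \<le> (k + 1) * T"
    proof -
      have "m - 1 = k * T + (m - 1) mod T" unfolding k_def by simp
      moreover have "(m - 1) mod T < T" using assms(2) by simp
      ultimately show ?thesis using False by (simp add: add.commute)
    qed
    then have "real m \<le> real ((k + 1) * T)" by (rule of_nat_mono)
    then have "real m / real T \<le> real k + 1"
      using assms(2) by (simp add: divide_le_eq algebra_simps)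
    then have "(real m / real T) powr p \<le> (real k + 1) powr p"
      using assms(1) by (intro powr_mono2) auto
    ultimately have "scaled_powr p T t
        \<le> ennreal ((real k + 1) powr p) * indicator {t. enat (k * T) < t} t"
      using enat by (simp add: scaled_powr_def ennreal_leI)
    also have "\<dots> \<le> (\<Sum>k. ennreal ((real k + 1) powr p) * indicator {t. enat (k * T) < t} t)"
      by (rule ennreal_le_suminf)
    finally show ?thesis .
  qed (simp add: enat scaled_powr_def) \<comment> \<open>for \<open>m = 0\<close> note \<open>0 powr p = 0\<close>, even for \<open>p = 0\<close>\<close>
next
  case infinity
  have "\<not> summable (\<lambda>k. (real k + 1) powr p)"
  proof
    assume "summable (\<lambda>k. (real k + 1) powr p)"
    then have "(\<lambda>k. (real k + 1) powr p) \<longlonglongrightarrow> 0" by (rule summable_LIMSEQ_zero)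
    moreover have "\<forall>k. 1 \<le> (real k + 1) powr p"
      using assms(1) by (auto intro: ge_one_powr_ge_zero)
    ultimately show False
      using LIMSEQ_le_const[of _ 0 1] by force
  qed
  then have "(\<Sum>k. ennreal ((real k + 1) powr p)) = \<top>"
    by (intro summable_iff_suminf_neq_top) simp
  with infinity show ?thesis by simp
qed

lemma emeasure_le_nn_integral_scaled_powr:
  assumes "0 \<le> p" "0 < T" "{x \<in> space M. enat T \<le> f x} \<in> sets M"
  shows "emeasure M {x \<in> space M. enat T \<le> f x} \<le> (\<integral>\<^sup>+ x. scaled_powr p T (f x) \<partial>M)"
proof -
  have "emeasure M {x \<in> space M. enat T \<le> f x}
      = (\<integral>\<^sup>+ x. indicator {x \<in> space M. enat T \<le> f x} x \<partial>M)"
    using assms(3) by simp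
  also have "\<dots> \<le> (\<integral>\<^sup>+ x. scaled_powr p T (f x) \<partial>M)"
    using one_le_scaled_powr[OF assms(1,2)] by (intro nn_integral_mono) (simp split: split_indicator)
  finally show ?thesis .
qed

lemma nn_integral_scaled_powr_le_suminf:
  assumes "0 \<le> p" "0 < T" "\<And>n. {x \<in> space M. enat n < f x} \<in> sets M"
  shows "(\<integral>\<^sup>+ x. scaled_powr p T (f x) \<partial>M)
    \<le> (\<Sum>k. ennreal ((real k + 1) powr p) * emeasure M {x \<in> space M. enat (k * T) < f x})"
proof -
  let ?tail = "\<lambda>k. {x \<in> space M. enat (k * T) < f x}"
  have "(\<integral>\<^sup>+ x. scaled_powr p T (f x) \<partial>M)
      \<le> (\<integral>\<^sup>+ x. (\<Sum>k. ennreal ((real k + 1) powr p) * indicator (?tail k) x) \<partial>M)"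
    using scaled_powr_le_suminf[OF assms(1,2)]
    by (intro nn_integral_mono) (simp add: indicator_def)
  also have "\<dots> = (\<Sum>k. ennreal ((real k + 1) powr p) * emeasure M (?tail k))"
    using assms(3) by (subst nn_integral_suminf) (simp_all add: nn_integral_cmult_indicator)
  finally show ?thesis .
qed

interpretation eps_seq: sequence_space "measure_pmf eps_pmf"
  by unfold_locales

interpretation Q: prob_space Q
  unfolding Q_def by (rule eps_seq.P.prob_space_axioms)

lemma space_Q [simp]: "space Q = UNIV"
  by (simp add: Q_def space_PiM)

lemma measurable_coordinate: "Measurable.pred Q (\<lambda>w. w i \<in> A)"
  unfolding Q_def by measurable

lemma measurable_hit [measurable]: "Measurable.pred Q (\<lambda>w. hit L w j)"
  using measurable_coordinate[of _ "{1}"]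
  unfolding hit_def eps_def
  by (intro pred_intros_logic pred_intros_finite measurable_coordinate) simp_all

lemma sets_hit: "{w. hit L w j} \<in> sets Q"
  using measurable_hit by (simp add: pred_def)

lemma enat_less_tau1_iff: "enat n < tau1 L w \<longleftrightarrow> (\<forall>j\<le>n. \<not> hit L w j)"
proof (cases "\<exists>j. hit L w j")
  case True
  let ?first = "LEAST j. hit L w j"
  have "hit L w ?first" using True by (rule LeastI_ex)
  then have "(\<forall>j\<le>n. \<not> hit L w j) \<longleftrightarrow> n < ?first"
    by (meson not_less_Least le_less_trans not_le)
  with True show ?thesis by (simp add: tau1_def)
qed (simp add: tau1_def)

lemma measurable_enat_less_tau1 [measurable]: "Measurable.pred Q (\<lambda>w. enat n < tau1 L w)"
  unfolding enat_less_tau1_iff by measurable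

lemma sets_enat_less_tau1: "{w. enat n < tau1 L w} \<in> sets Q"
  using measurable_enat_less_tau1 by (simp add: pred_def)

lemma hit_gt: "hit L w j \<Longrightarrow> L < j"
  by (simp add: hit_def)

lemma hit_cong:
  assumes "\<And>i. i < j \<Longrightarrow> w i = v i"
  shows "hit L w j \<longleftrightarrow> hit L v j"
proof (cases "L < j")
  case True
  have eq: "eps w k = eps v k" if "k \<in> {j - L..j}" for k
  proof -
    from that True have "k - 1 < j" by auto
    with assms show ?thesis by (simp add: eps_def)
  qed
  then have "(\<forall>k\<in>{j - L..j - 1}. eps w k = 1) \<longleftrightarrow> (\<forall>k\<in>{j - L..j - 1}. eps v k = 1)"
    by (intro ball_cong) auto
  moreover have "eps w j = eps v j" using eq by simp
  ultimately show ?thesis by (simp add: hit_def)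
qed (simp add: hit_def)

lemma enat_less_tau1_cong:
  assumes "\<And>i. i < n \<Longrightarrow> w i = v i"
  shows "enat n < tau1 L w \<longleftrightarrow> enat n < tau1 L v"
proof -
  have "hit L w j \<longleftrightarrow> hit L v j" if "j \<le> n" for j
    using that assms by (intro hit_cong) auto
  then show ?thesis by (simp add: enat_less_tau1_iff)
qed

lemma hits_separated:
  assumes "hit L w i" "hit L w j" "i < j"
  shows "i + L < j"
proof (rule ccontr)
  assume "\<not> i + L < j"
  then have "i \<in> {j - L..j - 1}" using assms(3) by auto
  with assms(1,2) show False by (auto simp: hit_def)
qed

definition ones_run :: "nat \<Rightarrow> (nat \<Rightarrow> int) \<Rightarrow> bool" where
  "ones_run L w \<longleftrightarrow> (\<forall>i<L. w i = 1) \<and> w L \<in> {-1, 0}"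

lemma hit_iff_ones_run: "hit L w (s + L + 1) \<longleftrightarrow> ones_run L (\<lambda>i. w (s + i))"
proof -
  have runs: "(\<forall>k\<in>{s + 1..s + L}. w (k - 1) = 1) \<longleftrightarrow> (\<forall>i<L. w (s + i) = 1)"
  proof
    assume "\<forall>k\<in>{s + 1..s + L}. w (k - 1) = 1"
    moreover have "s + i + 1 \<in> {s + 1..s + L}" if "i < L" for i
      using that by simp
    ultimately show "\<forall>i<L. w (s + i) = 1" by fastforce
  next
    assume "\<forall>i<L. w (s + i) = 1"
    moreover have "k - 1 = s + (k - 1 - s) \<and> k - 1 - s < L" if "k \<in> {s + 1..s + L}" for k
      using that by auto
    ultimately show "\<forall>k\<in>{s + 1..s + L}. w (k - 1) = 1" by metis
  qed
  have "{s + L + 1 - L..s + L + 1 - 1} = {s + 1..s + L}" "s + L + 1 - 1 = s + L" by auto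
  then show ?thesis unfolding hit_def eps_def ones_run_def using runs by (simp only:) simp
qed

lemma sets_ones_run: "{w. ones_run L w} \<in> sets Q"
proof -
  have "Measurable.pred Q (ones_run L)"
    unfolding ones_run_def
    by (intro pred_intros_logic pred_intros_countable pred_intros_imp' measurable_coordinate
        measurable_coordinate[of _ "{1}", simplified])
  then show ?thesis by (simp add: pred_def)
qed

definition run_prob :: "nat \<Rightarrow> real" where
  "run_prob L = 3 / 4 ^ Suc L"

lemma run_prob_nonneg: "0 \<le> run_prob L"
  by (simp add: run_prob_def)

lemma run_prob_le_one: "run_prob L \<le> 1"
proof -
  have "(1::real) \<le> 4 ^ L" by simp
  then have "3 \<le> 4 * (4::real) ^ L" by linarith
  then show ?thesis by (simp add: run_prob_def divide_le_eq)
qed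

lemma measure_ones_run: "measure Q {w. ones_run L w} = run_prob L"
proof -
  let ?X = "\<lambda>i::nat. if i < L then {1::int} else {-1, 0}"
  have "{w. ones_run L w} = {w \<in> space Q. \<forall>i\<in>{..L}. w i \<in> ?X i}"
    by (auto simp: ones_run_def le_less)
  then have "emeasure Q {w. ones_run L w} = (\<Prod>i\<in>{..L}. emeasure (measure_pmf eps_pmf) (?X i))"
    unfolding Q_def by (simp add: eps_seq.emeasure_PiM_Collect)
  also have "\<dots> = (\<Prod>i\<in>{..L}. ennreal (if i < L then 1/4 else 3/4))"
    by (intro prod.cong refl)
      (simp add: measure_pmf.emeasure_eq_measure measure_measure_pmf_finite eps_pmf_def pmf_of_multiset)
  also have "\<dots> = ennreal (\<Prod>i\<in>{..L}. if i < L then 1/4 else 3/4)"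
    by (simp add: prod_ennreal)
  also have "(\<Prod>i\<in>{..L}. if i < L then 1/4 else 3/4 :: real) = run_prob L"
    by (simp add: lessThan_Suc_atMost[symmetric] run_prob_def power_one_over)
  finally show ?thesis by (simp add: Q.emeasure_eq_measure run_prob_nonneg)
qed

lemma measure_prefix_and_hit:
  assumes "A \<in> sets Q" and prefix: "\<And>w v. (\<And>i. i < s \<Longrightarrow> w i = v i) \<Longrightarrow> w \<in> A \<longleftrightarrow> v \<in> A"
  shows "measure Q {w \<in> A. hit L w (s + L + 1)} = measure Q A * run_prob L"
proof -
  have "{w \<in> A. hit L w (s + L + 1)} = {w \<in> A. (\<lambda>i. w (s + i)) \<in> {w. ones_run L w}}"
    by (simp only: hit_iff_ones_run mem_Collect_eq)
  also have "emeasure Q \<dots> = emeasure Q A * emeasure Q {w. ones_run L w}"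
    using eps_seq.emeasure_prefix_and_shift[OF _ _ prefix] assms(1) sets_ones_run
    unfolding Q_def by blast
  finally have "ennreal (measure Q {w \<in> A. hit L w (s + L + 1)}) = ennreal (measure Q A * run_prob L)"
    by (simp add: Q.emeasure_eq_measure measure_ones_run ennreal_mult run_prob_nonneg)
  then show ?thesis by (simp add: run_prob_nonneg)
qed

lemma measure_hit_le: "measure Q {w. hit L w j} \<le> run_prob L"
proof (cases "L < j")
  case True
  define s where "s = j - L - 1"
  with True have "j = s + L + 1" by simp
  then show ?thesis
    using measure_prefix_and_hit[OF sets.top, of s L] Q.prob_space by simp
next
  case False
  then have "{w. hit L w j} = {}" using hit_gt by auto
  then show ?thesis by (simp add: run_prob_nonneg)
qed

definition survival :: "nat \<Rightarrow> nat \<Rightarrow> real" where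
  "survival L n = measure Q {w. enat n < tau1 L w}"

lemma survival_antimono: "m \<le> n \<Longrightarrow> survival L n \<le> survival L m"
  unfolding survival_def
  by (intro Q.finite_measure_mono sets_enat_less_tau1) (auto simp: enat_less_tau1_iff)

lemma survival_le_one: "survival L n \<le> 1"
  by (simp add: survival_def)

lemma survival_step: "survival L (s + L + 1) \<le> (1 - run_prob L) * survival L (s + L)"
proof -
  let ?B = "{w. enat (s + L) < tau1 L w}"
  let ?C = "{w \<in> {w. enat s < tau1 L w}. hit L w (s + L + 1)}"
  have C_sets: "?C \<in> sets Q"
    using sets.Int[OF sets_enat_less_tau1 sets_hit, of s L L "s + L + 1"]
    by (simp only: Int_def mem_Collect_eq)
  have C_measure: "measure Q ?C = survival L s * run_prob L"
    unfolding survival_def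
    by (rule measure_prefix_and_hit[OF sets_enat_less_tau1]) (unfold mem_Collect_eq, rule enat_less_tau1_cong)
  have C_sub_B: "?C \<subseteq> ?B"
  proof
    fix w assume "w \<in> ?C"
    then have no_early_hit: "\<forall>j\<le>s. \<not> hit L w j" and "hit L w (s + L + 1)"
      by (auto simp: enat_less_tau1_iff)
    have "\<not> hit L w j" if "j \<le> s + L" for j
    proof
      assume "hit L w j"
      with \<open>hit L w (s + L + 1)\<close> that have "j + L < s + L + 1" by (intro hits_separated) auto
      with no_early_hit \<open>hit L w j\<close> show False by simp
    qed
    then show "w \<in> ?B" by (simp add: enat_less_tau1_iff)
  qed
  have "{w. enat (s + L + 1) < tau1 L w} \<subseteq> ?B - ?C"
    by (auto simp: enat_less_tau1_iff)
  then have "survival L (s + L + 1) \<le> measure Q (?B - ?C)"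
    unfolding survival_def by (intro Q.finite_measure_mono sets.Diff sets_enat_less_tau1 C_sets)
  also have "\<dots> = survival L (s + L) - survival L s * run_prob L"
    unfolding Q.finite_measure_Diff[OF sets_enat_less_tau1 C_sets C_sub_B] C_measure
    by (simp add: survival_def)
  also have "\<dots> \<le> survival L (s + L) - survival L (s + L) * run_prob L"
    using survival_antimono[of s "s + L" L] run_prob_nonneg[of L] by (simp add: mult_right_mono)
  finally show ?thesis by (simp add: algebra_simps)
qed

lemma survival_le_power: "survival L n \<le> (1 - run_prob L) ^ (n - L)"
proof (induction n)
  case (Suc n)
  show ?case
  proof (cases "Suc n \<le> L")
    case False
    then obtain s where s: "n = s + L" using le_Suc_ex by (metis add.commute not_less_eq_eq)
    have "survival L (Suc n) \<le> (1 - run_prob L) * survival L n"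
      using survival_step[where s = s and L = L] by (simp add: s)
    also have "\<dots> \<le> (1 - run_prob L) * (1 - run_prob L) ^ (n - L)"
      using Suc.IH run_prob_le_one[of L] by (intro mult_left_mono) auto
    finally show ?thesis by (simp add: s Suc_diff_le)
  qed (simp add: survival_le_one)
qed (simp add: survival_le_one)

lemma survival_ge: "1 - real (Suc n) * run_prob L \<le> survival L n"
proof -
  have "space Q - {w. enat n < tau1 L w} = (\<Union>j\<le>n. {w. hit L w j})"
    by (auto simp: enat_less_tau1_iff)
  then have "1 - survival L n = measure Q (\<Union>j\<le>n. {w. hit L w j})"
    using Q.prob_compl[OF sets_enat_less_tau1[of n L]] by (simp add: survival_def)
  also have "\<dots> \<le> (\<Sum>j\<le>n. measure Q {w. hit L w j})"
    by (rule measure_UNION_le) (simp_all add: sets_hit)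
  also have "\<dots> \<le> (\<Sum>j\<le>n. run_prob L)"
    by (intro sum_mono measure_hit_le)
  finally show ?thesis by simp
qed

lemma four_pow_mult_run_prob: "4 ^ L * run_prob L = 3 / 4"
  by (simp add: run_prob_def)

lemma survival_le_exp: "survival L (k * 4 ^ L) \<le> exp (- (3 / 8) * real k)"
proof (cases "k = 0")
  case False
  let ?\<pi> = "run_prob L" and ?m = "k * 4 ^ L - L"
  have linear_le_pow: "2 * n \<le> 4 ^ n" for n :: nat
  proof (induction n)
    case (Suc n)
    moreover have "2 * Suc n = 2 * n + 2" "(4::nat) ^ Suc n = 4 * 4 ^ n" "1 \<le> (4::nat) ^ n"
      by simp_all
    ultimately show ?case by linarith
  qed simp
  have "4 ^ L \<le> k * 4 ^ L" using False by simp
  with linear_le_pow[of L] have "k * 4 ^ L \<le> 2 * ?m" by linarith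
  then have "real (k * 4 ^ L) \<le> real (2 * ?m)" by (rule of_nat_mono)
  then have half_le_m: "real k * 4 ^ L / 2 \<le> real ?m" by simp
  have "survival L (k * 4 ^ L) \<le> (1 - ?\<pi>) ^ ?m" by (rule survival_le_power)
  also have "\<dots> \<le> exp (- ?\<pi>) ^ ?m"
    using exp_ge_add_one_self[of "- ?\<pi>"] run_prob_le_one[of L] by (intro power_mono) auto
  also have "\<dots> = exp (- (?\<pi> * real ?m))"
    by (simp add: exp_of_nat_mult[symmetric] mult.commute)
  also have "\<dots> \<le> exp (- (3 / 8) * real k)"
  proof -
    have "3 / 8 * real k = ?\<pi> * (real k * 4 ^ L / 2)"
      using four_pow_mult_run_prob[of L] by (simp add: algebra_simps)
    also have "\<dots> \<le> ?\<pi> * real ?m"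
      using half_le_m run_prob_nonneg by (rule mult_left_mono)
    finally show ?thesis by simp
  qed
  finally show ?thesis .
qed (simp add: survival_le_one)

lemma taubar_pow_eq_scaled_powr: "taubar_pow p L w = scaled_powr p (4 ^ L) (tau1 L w)"
  by (cases "tau1 L w") (simp_all add: taubar_pow_def scaled_powr_def)

lemma quarter_le_moment:
  assumes "0 \<le> p"
  shows "ennreal (1 / 4) \<le> (\<integral>\<^sup>+ w. taubar_pow p L w \<partial>Q)"
proof -
  have late: "{w \<in> space Q. enat (4 ^ L) \<le> tau1 L w} = {w. enat (4 ^ L - 1) < tau1 L w}"
    using Suc_ile_eq[of "4 ^ L - 1"] by simp
  have late_sets: "{w \<in> space Q. enat (4 ^ L) \<le> tau1 L w} \<in> sets Q"
    unfolding late by (rule sets_enat_less_tau1)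
  have "1 / 4 \<le> survival L (4 ^ L - 1)"
    using survival_ge[of "4 ^ L - 1" L] four_pow_mult_run_prob[of L] by simp
  then have "ennreal (1 / 4) \<le> emeasure Q {w \<in> space Q. enat (4 ^ L) \<le> tau1 L w}"
    unfolding late by (simp add: survival_def Q.emeasure_eq_measure ennreal_leI)
  also have "\<dots> \<le> (\<integral>\<^sup>+ w. scaled_powr p (4 ^ L) (tau1 L w) \<partial>Q)"
    using assms late_sets by (intro emeasure_le_nn_integral_scaled_powr) simp_all
  finally show ?thesis by (simp add: taubar_pow_eq_scaled_powr)
qed

definition moment_const :: "real \<Rightarrow> real" where
  "moment_const p = (\<Sum>k. (real k + 1) powr p * exp (- (3 / 8) * real k))"

lemma summable_moment_const: "summable (\<lambda>k. (real k + 1) powr p * exp (- (3 / 8) * real k))"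
proof (rule summable_comparison_test_bigo)
  show "(\<lambda>k. (real k + 1) powr p * exp (- (3 / 8) * real k)) \<in> O(\<lambda>k. exp (- (1 / 4) * real k))"
    by real_asymp
  have "(\<lambda>k. norm (exp (- (1 / 4) * real k))) = (\<lambda>k. exp (- (1 / 4 :: real)) ^ k)"
    by (simp add: exp_of_nat_mult[symmetric] mult.commute)
  then show "summable (\<lambda>k. norm (exp (- (1 / 4 :: real) * real k)))"
    by (simp add: summable_geometric)
qed

lemma moment_const_ge_one: "1 \<le> moment_const p"
  using sum_le_suminf[OF summable_moment_const, of "{0}"] by (simp add: moment_const_def)

lemma moment_le_moment_const:
  assumes "0 \<le> p"
  shows "(\<integral>\<^sup>+ w. taubar_pow p L w \<partial>Q) \<le> ennreal (moment_const p)"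
proof -
  have "(\<integral>\<^sup>+ w. taubar_pow p L w \<partial>Q)
      \<le> (\<Sum>k. ennreal ((real k + 1) powr p) * emeasure Q {w \<in> space Q. enat (k * 4 ^ L) < tau1 L w})"
    unfolding taubar_pow_eq_scaled_powr
    using assms by (intro nn_integral_scaled_powr_le_suminf) (simp_all add: sets_enat_less_tau1)
  also have "\<dots> \<le> (\<Sum>k. ennreal ((real k + 1) powr p * exp (- (3 / 8) * real k)))"
  proof (intro suminf_le summableI)
    fix k
    have "emeasure Q {w \<in> space Q. enat (k * 4 ^ L) < tau1 L w} \<le> ennreal (exp (- (3 / 8) * real k))"
      using survival_le_exp[of L k] by (simp add: survival_def Q.emeasure_eq_measure ennreal_leI)
    then show "ennreal ((real k + 1) powr p) * emeasure Q {w \<in> space Q. enat (k * 4 ^ L) < tau1 L w}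
        \<le> ennreal ((real k + 1) powr p * exp (- (3 / 8) * real k))"
      by (simp add: ennreal_mult mult_left_mono)
  qed
  also have "\<dots> = ennreal (moment_const p)"
    unfolding moment_const_def by (intro suminf_ennreal2 summable_moment_const) simp
  finally show ?thesis .
qed

theorem lemma3p1:
  fixes p :: real
  assumes "p \<ge> 1"
  shows "\<exists>c c'. c > 0 \<and> c' > 0 \<and>
           (\<forall>L::nat. L \<ge> 1 \<longrightarrow>
              ennreal (c powr p) \<le> (\<integral>\<^sup>+ w. taubar_pow p L w \<partial>Q) \<and>
              (\<integral>\<^sup>+ w. taubar_pow p L w \<partial>Q) \<le> ennreal (c' powr p))"
proof -
  have "0 \<le> p" "p \<noteq> 0" using assms by auto
  define c :: real where "c = (1 / 4) powr (1 / p)"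
  define c' where "c' = moment_const p powr (1 / p)"
  have c_pow: "c powr p = 1 / 4" and c'_pow: "c' powr p = moment_const p"
    using \<open>p \<noteq> 0\<close> moment_const_ge_one[of p] by (simp_all add: c_def c'_def powr_powr)
  \<comment> \<open>Both moment bounds hold for every \<open>L\<close>.\<close>
  show ?thesis
  proof (rule exI[of _ c], rule exI[of _ c'], intro conjI allI impI)
    show "c > 0" "c' > 0"
      using moment_const_ge_one[of p] by (simp_all add: c_def c'_def)
    fix L :: nat
    show "ennreal (c powr p) \<le> (\<integral>\<^sup>+ w. taubar_pow p L w \<partial>Q)"
      unfolding c_pow using \<open>0 \<le> p\<close> by (rule quarter_le_moment)
    show "(\<integral>\<^sup>+ w. taubar_pow p L w \<partial>Q) \<le> ennreal (c' powr p)"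
      unfolding c'_pow using \<open>0 \<le> p\<close> by (rule moment_le_moment_const)
  qed
qed

end
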